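(* Consider the system $\dot x(t)=f(x(t),u(t))$, $y(t)=h(x(t),u(t))$ with $x(t)\in X\subset\mathbb{R}^n$, $u(t)\in U\subset\mathbb{R}^m$, $y(t)\in Y\subset\mathbb{R}^m$, where trajectories remain in $X$ and $Y$, and let $\phi(t,t_0,x_0,u_{t_0:t})$ denote the state at time $t$ from state $x_0$ at time $t_0$ under input $u_{t_0:t}=\{u(\tau):\tau\in[t_0,t]\}$. Let $S:X\to\mathbb{R}_{\ge0}$ with $S(\mathbf{0})=0$ be a storage function, and for $t_1>t_0\ge0$, $x_0\in X$, $u_{t_0:t_1}\subset U$, with $y$ the resulting output and $x_1=\phi(t_1,t_0,x_0,u_{t_0:t_1})$, put $$\psi_\gamma=\frac{\int_{t_0}^{t_1}y^\mathsf{T}y\,dt+(S(x_1)-S(x_0))}{\int_{t_0}^{t_1}u^\mathsf{T}u\,dt},\quad \psi_\nu=\frac{\int_{t_0}^{t_1}u^\mathsf{T}y\,dt-(S(x_1)-S(x_0))}{\int_{t_0}^{t_1}u^\mathsf{T}u\,dt},\quad \psi_\rho=\frac{\int_{t_0}^{t_1}u^\mathsf{T}y\,dt-(S(x_1)-S(x_0))}{\int_{t_0}^{t_1}y^\mathsf{T}y\,dt},$$ defined whenever the denominator is nonzero, and let $\gamma_*^2=\max\psi_\gamma$, $\nu_*=\min\psi_\nu$, $\rho_*=\min\psi_\rho$ over all such $(t_1,t_0,x_0,u_{t_0:t_1})$ with nonzero denominator. Suppose a given input-output profile $(u(t),y(t))$, $t\in[t_o,t_f)$, with state trajectory $x(t)$,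 satisfies $|\tfrac{d}{dt}S(x(t))|\le K_s$ for all $t\in[t_o,t_f)$, for a known constant $K_s$. For $[t_0,t_1)\subseteq[t_o,t_f)$ define $$\hat\psi_\gamma(t_0,t_1)=\frac{\int_{t_0}^{t_1}y^\mathsf{T}y\,dt-K_s(t_1-t_0)}{\int_{t_0}^{t_1}u^\mathsf{T}u\,dt},\ \hat\psi_\nu(t_0,t_1)=\frac{\int_{t_0}^{t_1}u^\mathsf{T}y\,dt+K_s(t_1-t_0)}{\int_{t_0}^{t_1}u^\mathsf{T}u\,dt},\ \hat\psi_\rho(t_0,t_1)=\frac{\int_{t_0}^{t_1}u^\mathsf{T}y\,dt+K_s(t_1-t_0)}{\int_{t_0}^{t_1}y^\mathsf{T}y\,dt},$$ and let $\hat\gamma_*^2=\max\hat\psi_\gamma$, $\hat\nu_*=\min\hat\psi_\nu$, $\hat\rho_*=\min\hat\psi_\rho$, each over the intervals $[t_0,t_1)\subseteq[t_o,t_f)$, $t_0<t_1$, on which the respective denominator is nonzero. Then $\hat\gamma_*^2\le\gamma_*^2$, $\hat\nu_*\ge\nu_*$ and $\hat\rho_*\ge\rho_*$.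
   Context: The quantities $\gamma_*^2,\nu_*,\rho_*$ are the paper's optimal $\mathcal{L}_2$-gain, input feedforward passivity and output feedback passivity indices, expressed through the fractional functions above. *)

theory Defs
  imports "HOL-Analysis.Analysis"
begin

text \<open>Then x t0 = x0 and x t1 = phi(t1,t0,x0,u).\<close>

definition is_traj ::
  "(real^'n \<Rightarrow> real^'m \<Rightarrow> real^'n) \<Rightarrow> (real^'n \<Rightarrow> real^'m \<Rightarrow> real^'m) \<Rightarrow>
   (real^'n) set \<Rightarrow> (real^'m) set \<Rightarrow> (real^'m) set \<Rightarrow> real \<Rightarrow> real \<Rightarrow>
   (real \<Rightarrow> real^'n) \<Rightarrow> (real \<Rightarrow> real^'m) \<Rightarrow> bool" where
  "is_traj f h X U Y t0 t1 x u \<longleftrightarrow> 0 \<le> t0 \<and> t0 < t1 \<and>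
     (\<forall>t\<in>{t0..t1}. (x has_vector_derivative f (x t) (u t)) (at t within {t0..t1})
        \<and> x t \<in> X \<and> u t \<in> U \<and> h (x t) (u t) \<in> Y)"

definition int_yy :: "(real^'n \<Rightarrow> real^'m \<Rightarrow> real^'m) \<Rightarrow> (real \<Rightarrow> real^'n) \<Rightarrow> (real \<Rightarrow> real^'m) \<Rightarrow> real \<Rightarrow> real \<Rightarrow> real" where
  "int_yy h x u t0 t1 = integral {t0..t1} (\<lambda>t. h (x t) (u t) \<bullet> h (x t) (u t))"

definition int_uy :: "(real^'n \<Rightarrow> real^'m \<Rightarrow> real^'m) \<Rightarrow> (real \<Rightarrow> real^'n) \<Rightarrow> (real \<Rightarrow> real^'m) \<Rightarrow> real \<Rightarrow> real \<Rightarrow> real" where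
  "int_uy h x u t0 t1 = integral {t0..t1} (\<lambda>t. u t \<bullet> h (x t) (u t))"

definition int_uu :: "(real \<Rightarrow> real^'m) \<Rightarrow> real \<Rightarrow> real \<Rightarrow> real" where
  "int_uu u t0 t1 = integral {t0..t1} (\<lambda>t. u t \<bullet> u t)"

definition psi_gamma_vals where
  "psi_gamma_vals f h X U Y S =
    {(int_yy h x u t0 t1 + (S (x t1) - S (x t0))) / int_uu u t0 t1 | t0 t1 x u.
       is_traj f h X U Y t0 t1 x u \<and> int_uu u t0 t1 \<noteq> 0}"

definition psi_nu_vals where
  "psi_nu_vals f h X U Y S =
    {(int_uy h x u t0 t1 - (S (x t1) - S (x t0))) / int_uu u t0 t1 | t0 t1 x u.
       is_traj f h X U Y t0 t1 x u \<and> int_uu u t0 t1 \<noteq> 0}"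

definition psi_rho_vals where
  "psi_rho_vals f h X U Y S =
    {(int_uy h x u t0 t1 - (S (x t1) - S (x t0))) / int_yy h x u t0 t1 | t0 t1 x u.
       is_traj f h X U Y t0 t1 x u \<and> int_yy h x u t0 t1 \<noteq> 0}"

definition hat_gamma_vals where
  "hat_gamma_vals h Ks to tf x u =
    {(int_yy h x u t0 t1 - Ks * (t1 - t0)) / int_uu u t0 t1 | t0 t1.
       to \<le> t0 \<and> t0 < t1 \<and> t1 \<le> tf \<and> int_uu u t0 t1 \<noteq> 0}"

definition hat_nu_vals where
  "hat_nu_vals h Ks to tf x u =
    {(int_uy h x u t0 t1 + Ks * (t1 - t0)) / int_uu u t0 t1 | t0 t1.
       to \<le> t0 \<and> t0 < t1 \<and> t1 \<le> tf \<and> int_uu u t0 t1 \<noteq> 0}"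

definition hat_rho_vals where
  "hat_rho_vals h Ks to tf x u =
    {(int_uy h x u t0 t1 + Ks * (t1 - t0)) / int_yy h x u t0 t1 | t0 t1.
       to \<le> t0 \<and> t0 < t1 \<and> t1 \<le> tf \<and> int_yy h x u t0 t1 \<noteq> 0}"

definition is_max_of :: "real set \<Rightarrow> real \<Rightarrow> bool" where
  "is_max_of A m \<longleftrightarrow> m \<in> A \<and> (\<forall>a\<in>A. a \<le> m)"
definition is_min_of :: "real set \<Rightarrow> real \<Rightarrow> bool" where
  "is_min_of A m \<longleftrightarrow> m \<in> A \<and> (\<forall>a\<in>A. m \<le> a)"

end

theory Submission
  imports Defs
begin

text \<open>Every subinterval \<open>[t0,t1]\<close> of the profile is itself an admissible experiment, and by the
  mean value theorem its storage increment \<open>S (x t1) - S (x t0)\<close> has absolute value at most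
  \<open>Ks * (t1 - t0)\<close>. Replacing the increment by this worst case can only decrease
  \<open>\<psi>\<^sub>\<gamma>\<close> and increase \<open>\<psi>\<^sub>\<nu>\<close>, \<open>\<psi>\<^sub>\<rho>\<close>, since their denominators are integrals of squares and
  hence positive once nonzero. So every data-driven value is dominated by a model value, and the
  extrema compare accordingly.\<close>

lemma abs_increment_le_derivative_bound:
  fixes g g' :: "real \<Rightarrow> real"
  assumes "a < b" and "continuous_on {a..b} g"
    and "\<And>t. a < t \<Longrightarrow> t < b \<Longrightarrow> (g has_real_derivative g' t) (at t)"
    and "\<And>t. a < t \<Longrightarrow> t < b \<Longrightarrow> \<bar>g' t\<bar> \<le> K"
  shows "\<bar>g b - g a\<bar> \<le> K * (b - a)"
proof -
  obtain l z where z: "a < z" "z < b" "(g has_real_derivative l) (at z)" "g b - g a = (b - a) * l"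
    using MVT[OF assms(1,2)] assms(3) real_differentiable_def by blast
  have "l = g' z" using z(3) assms(3)[OF z(1,2)] DERIV_unique by blast
  then have "\<bar>g b - g a\<bar> = (b - a) * \<bar>g' z\<bar>" using z(4) assms(1) by (simp add: abs_mult)
  also have "\<dots> \<le> (b - a) * K" using assms(1,4) z(1,2) by (intro mult_left_mono) auto
  finally show ?thesis by (simp add: mult.commute)
qed

lemma abs_increment_le_on_subinterval:
  fixes g D :: "real \<Rightarrow> real"
  assumes deriv: "\<forall>t\<in>{to..<tf}. (g has_real_derivative D t) (at t within {to..tf}) \<and> \<bar>D t\<bar> \<le> K"
    and cont: "continuous_on {to..tf} g"
    and "to \<le> t0" "t0 < t1" "t1 \<le> tf"
  shows "\<bar>g t1 - g t0\<bar> \<le> K * (t1 - t0)"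
proof (rule abs_increment_le_derivative_bound)
  show "continuous_on {t0..t1} g"
    using assms(3-5) by (intro continuous_on_subset[OF cont]) auto
  fix t assume "t0 < t" "t < t1"
  then have "to < t" "t < tf" using assms(3-5) by auto
  then have "t \<in> {to..<tf}" and "at t within {to..tf} = at t"
    by (auto simp: at_within_Icc_at)
  then show "(g has_real_derivative D t) (at t)" "\<bar>D t\<bar> \<le> K"
    using deriv by metis+
qed fact

lemma is_traj_subinterval:
  assumes "is_traj f h X U Y to tf x u" "to \<le> t0" "t0 < t1" "t1 \<le> tf"
  shows "is_traj f h X U Y t0 t1 x u"
proof -
  have sub: "{t0..t1} \<subseteq> {to..tf}" using assms(2-4) by auto
  with assms show ?thesis
    unfolding is_traj_def by (auto intro: has_vector_derivative_within_subset[OF _ sub])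
qed

lemma integral_pos_if_nonneg_nonzero:
  fixes F :: "'a::euclidean_space \<Rightarrow> real"
  assumes "\<And>t. 0 \<le> F t" "integral S F \<noteq> 0"
  shows "0 < integral S F"
proof (cases "F integrable_on S")
  case True
  then have "0 \<le> integral S F" using assms(1) by (rule integral_nonneg)
  with assms(2) show ?thesis by simp
qed (use assms(2) not_integrable_integral in auto)

lemma is_max_of_le_if_dominated:
  assumes "is_max_of A m" "is_max_of B m'" "\<And>b. b \<in> B \<Longrightarrow> \<exists>a\<in>A. b \<le> a"
  shows "m' \<le> m"
  using assms unfolding is_max_of_def by (meson order_trans)

lemma is_min_of_le_if_dominated:
  assumes "is_min_of A m" "is_min_of B m'" "\<And>b. b \<in> B \<Longrightarrow> \<exists>a\<in>A. a \<le> b"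
  shows "m \<le> m'"
  using assms unfolding is_min_of_def by (meson order_trans)

context
  fixes f h X U Y S x u Ks to tf
  assumes profile: "is_traj f h X U Y to tf x u"
    and storage_increment:
      "\<And>t0 t1. to \<le> t0 \<Longrightarrow> t0 < t1 \<Longrightarrow> t1 \<le> tf \<Longrightarrow> \<bar>S (x t1) - S (x t0)\<bar> \<le> Ks * (t1 - t0)"
begin

lemma hat_gamma_dominated:
  assumes "a \<in> hat_gamma_vals h Ks to tf x u"
  shows "\<exists>b\<in>psi_gamma_vals f h X U Y S. a \<le> b"
proof -
  obtain t0 t1 where a: "a = (int_yy h x u t0 t1 - Ks * (t1 - t0)) / int_uu u t0 t1"
    and t: "to \<le> t0" "t0 < t1" "t1 \<le> tf" and nz: "int_uu u t0 t1 \<noteq> 0"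
    using assms unfolding hat_gamma_vals_def by blast
  have "0 < int_uu u t0 t1"
    using nz unfolding int_uu_def by (intro integral_pos_if_nonneg_nonzero) auto
  then have "a \<le> (int_yy h x u t0 t1 + (S (x t1) - S (x t0))) / int_uu u t0 t1"
    unfolding a using storage_increment[OF t] by (intro divide_right_mono) auto
  moreover have "\<dots> \<in> psi_gamma_vals f h X U Y S"
    unfolding psi_gamma_vals_def using is_traj_subinterval[OF profile t] nz by blast
  ultimately show ?thesis by blast
qed

lemma hat_nu_dominated:
  assumes "a \<in> hat_nu_vals h Ks to tf x u"
  shows "\<exists>b\<in>psi_nu_vals f h X U Y S. b \<le> a"
proof -
  obtain t0 t1 where a: "a = (int_uy h x u t0 t1 + Ks * (t1 - t0)) / int_uu u t0 t1"
    and t: "to \<le> t0" "t0 < t1" "t1 \<le> tf" and nz: "int_uu u t0 t1 \<noteq> 0"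
    using assms unfolding hat_nu_vals_def by blast
  have "0 < int_uu u t0 t1"
    using nz unfolding int_uu_def by (intro integral_pos_if_nonneg_nonzero) auto
  then have "(int_uy h x u t0 t1 - (S (x t1) - S (x t0))) / int_uu u t0 t1 \<le> a"
    unfolding a using storage_increment[OF t] by (intro divide_right_mono) auto
  moreover have "(int_uy h x u t0 t1 - (S (x t1) - S (x t0))) / int_uu u t0 t1
      \<in> psi_nu_vals f h X U Y S"
    unfolding psi_nu_vals_def using is_traj_subinterval[OF profile t] nz by blast
  ultimately show ?thesis by blast
qed

lemma hat_rho_dominated:
  assumes "a \<in> hat_rho_vals h Ks to tf x u"
  shows "\<exists>b\<in>psi_rho_vals f h X U Y S. b \<le> a"
proof -
  obtain t0 t1 where a: "a = (int_uy h x u t0 t1 + Ks * (t1 - t0)) / int_yy h x u t0 t1"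
    and t: "to \<le> t0" "t0 < t1" "t1 \<le> tf" and nz: "int_yy h x u t0 t1 \<noteq> 0"
    using assms unfolding hat_rho_vals_def by blast
  have "0 < int_yy h x u t0 t1"
    using nz unfolding int_yy_def by (intro integral_pos_if_nonneg_nonzero) auto
  then have "(int_uy h x u t0 t1 - (S (x t1) - S (x t0))) / int_yy h x u t0 t1 \<le> a"
    unfolding a using storage_increment[OF t] by (intro divide_right_mono) auto
  moreover have "(int_uy h x u t0 t1 - (S (x t1) - S (x t0))) / int_yy h x u t0 t1
      \<in> psi_rho_vals f h X U Y S"
    unfolding psi_rho_vals_def using is_traj_subinterval[OF profile t] nz by blast
  ultimately show ?thesis by blast
qed

end

theorem lemma2:
  fixes f :: "real^'n \<Rightarrow> real^'m \<Rightarrow> real^'n"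
    and h :: "real^'n \<Rightarrow> real^'m \<Rightarrow> real^'m"
    and X :: "(real^'n) set" and U Y :: "(real^'m) set"
    and S :: "real^'n \<Rightarrow> real"
    and x :: "real \<Rightarrow> real^'n" and u :: "real \<Rightarrow> real^'m"
    and D :: "real \<Rightarrow> real"
    and Ks to tf g2 nu rho hg2 hnu hrho :: real
  assumes S_nonneg: "\<forall>z\<in>X. 0 \<le> S z"
    and zero_X: "0 \<in> X" and S_zero: "S 0 = 0"
    and profile: "is_traj f h X U Y to tf x u"
    and dS: "\<forall>t\<in>{to..<tf}. ((\<lambda>s. S (x s)) has_real_derivative D t) (at t within {to..tf}) \<and> \<bar>D t\<bar> \<le> Ks"
    and S_cont: "continuous_on {to..tf} (\<lambda>s. S (x s))"
  shows "(is_max_of (psi_gamma_vals f h X U Y S) g2 \<and> is_max_of (hat_gamma_vals h Ks to tf x u) hg2 \<longrightarrow> hg2 \<le> g2)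
       \<and> (is_min_of (psi_nu_vals f h X U Y S) nu \<and> is_min_of (hat_nu_vals h Ks to tf x u) hnu \<longrightarrow> nu \<le> hnu)
       \<and> (is_min_of (psi_rho_vals f h X U Y S) rho \<and> is_min_of (hat_rho_vals h Ks to tf x u) hrho \<longrightarrow> rho \<le> hrho)"
proof -
  have increment: "\<bar>S (x t1) - S (x t0)\<bar> \<le> Ks * (t1 - t0)"
    if "to \<le> t0" "t0 < t1" "t1 \<le> tf" for t0 t1
    using abs_increment_le_on_subinterval[OF dS S_cont that] .
  show ?thesis
    using is_max_of_le_if_dominated[OF _ _ hat_gamma_dominated[OF profile increment]]
      is_min_of_le_if_dominated[OF _ _ hat_nu_dominated[OF profile increment]]
      is_min_of_le_if_dominated[OF _ _ hat_rho_dominated[OF profile increment]]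
    by blast
qed

end
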